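(* Given a closed $\lambda$-abstraction $\lambda x.\vec t$, we have $\lambda x.\vec t\in[\![\sharp\mathbb B\rightarrow\sharp\mathbb B]\!]$ if and only if there are two value distributions $\vec v_1,\vec v_2\in[\![\sharp\mathbb B]\!]$ such that $\vec t[x:=\mathtt{tt}]\succ^*\vec v_1$, $\vec t[x:=\mathtt{ff}]\succ^*\vec v_2$ and $\langle\vec v_1|\vec v_2\rangle=0$.
   Context: Calculus. Pure values: $v,w::=x\mid\lambda x.\vec{s}\mid *\mid (v_1,v_2)\mid \mathtt{inl}(v)\mid\mathtt{inr}(v)$. Pure terms: $s,t::=v\mid s\,t\mid t;\vec{s}\mid \mathtt{let}\,(x_1,x_2)=t\,\mathtt{in}\,\vec{s}\mid \mathtt{match}\,t\,\{\mathtt{inl}\,x_1\mapsto\vec{s}_1\mid\mathtt{inr}\,x_2\mapsto\vec{s}_2\}$. Term distributions: $\vec{t}::=\vec{0}\mid t\mid \vec{s}+\vec{t}\mid\alpha\cdot\vec{t}$ ($\alpha\in\mathbb{C}$), considered at top level modulo the weak-vector-space congruence $\equiv$ (commutative monoid for $+,\vec0$; $1\cdot\vec t\equiv\vec t$; $\alpha\cdot(\beta\cdot\vec t)\equiv\alpha\beta\cdot\vec t$; both distributivity laws), which does not act inside pure terms and does not identify $0\cdot t$ with $\vec 0$; every distribution has a unique canonical form $\sum_i\alpha_it_i$ with distinct pure $t_i$. Constructs are extended by linearity. $\mathtt{tt}:=\mathtt{inl}( * )$, $\mathtt{ff}:=\mathtt{inr}( * )$. $\vec t[x:=w]$ is substitution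 of a pure value; $\vec t\langle x:=\vec w\rangle=\sum_j\beta_j\vec t[x:=w_j]$ for $\vec w=\sum_j\beta_jw_j$. Atomic evaluation $\triangleright$: $(\lambda x.\vec t)v\triangleright\vec t[x:=v]$, $*;\vec s\triangleright\vec s$, $\mathtt{let}\,(x,y)=(v,w)\,\mathtt{in}\,\vec s\triangleright\vec s[x:=v,y:=w]$, $\mathtt{match}\,\mathtt{inl}(v)\{\ldots\}\triangleright\vec s_1[x_1:=v]$, $\mathtt{match}\,\mathtt{inr}(v)\{\ldots\}\triangleright\vec s_2[x_2:=v]$, plus closure rules evaluating the argument of an application, then the function once the argument is a value, and the scrutinee of $;$, let, match. $\vec t\succ\vec t'$ iff $\vec t\equiv\alpha\cdot s+\vec r$, $\vec t'\equiv\alpha\cdot\vec s'+\vec r$ with $s\triangleright\vec s'$; $\succ^*$ is its reflexive-transitive closure. Semantics. For closed value distributions in canonical form, $\langle\sum_i\alpha_iv_i|\sum_j\beta_jw_j\rangle=\sum_{i,j}\overline{\alpha_i}\beta_j\delta_{v_i,w_j}$, $\|\vec v\|=\sqrt{\langle\vec v|\vec v\rangle}$, $\mathcal S$ the unit sphere. $[\![\mathbb U]\!]=\{*\}$, $[\![A+B]\!]=\{\mathtt{inl}(\vec v):\vec v\in[\![A]\!]\}\cup\{\mathtt{inr}(\vec w):\vec w\in[\![B]\!]\}$, $[\![\sharp A]\!]=\mathrm{Span}([\![A]\!])\cap\mathcal S$, $\mathbb B=\mathbb U+\mathbb U$, $[\![A\rightarrow B]\!]=\{\lambda x.\vec t\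 \text{closed}:\forall\vec v\in[\![A]\!],\ \vec t\langle x:=\vec v\rangle\Vdash B\}$ with $\vec t\Vdash B$ meaning $\vec t\succ^*\vec v$ for some $\vec v\in[\![B]\!]$. *)

theory Defs
  imports Complex_Main
begin

type_synonym name = string

text \<open>Pure values, pure terms and (syntactic) term distributions.  Inside pure
terms distributions are kept as syntax trees (the congruence does not act there).\<close>

datatype val = Var name | Lam name dist | Star | Pair val val | Inl val | Inr val
and trm = Val val | App trm trm | Seq trm dist
        | LetP name name trm dist
        | Match trm name dist name dist
and dist = DZero | DTm trm | DPlus dist dist | DScal complex dist

definition tt :: val where "tt = Inl Star"
definition ff :: val where "ff = Inr Star"

primrec fvv :: "val \<Rightarrow> name set" and fvt :: "trm \<Rightarrow> name set" and fvd :: "dist \<Rightarrow> name set" where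
  "fvv (Var y) = {y}"
| "fvv (Lam y d) = fvd d - {y}"
| "fvv Star = {}"
| "fvv (Pair v w) = fvv v \<union> fvv w"
| "fvv (Inl v) = fvv v"
| "fvv (Inr v) = fvv v"
| "fvt (Val v) = fvv v"
| "fvt (App s t) = fvt s \<union> fvt t"
| "fvt (Seq t d) = fvt t \<union> fvd d"
| "fvt (LetP y z t d) = fvt t \<union> (fvd d - {y, z})"
| "fvt (Match t y d1 z d2) = fvt t \<union> (fvd d1 - {y}) \<union> (fvd d2 - {z})"
| "fvd DZero = {}"
| "fvd (DTm t) = fvt t"
| "fvd (DPlus a b) = fvd a \<union> fvd b"
| "fvd (DScal \<alpha> a) = fvd a"

definition closed_v :: "val \<Rightarrow> bool" where "closed_v v \<longleftrightarrow> fvv v = {}"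

text \<open>\<open>substd x w d\<close> is \<open>d[x:=w]\<close>.  Only closed values are ever substituted
(all reductions happen on closed terms), so no renaming is needed.\<close>

primrec substv :: "name \<Rightarrow> val \<Rightarrow> val \<Rightarrow> val"
  and substt :: "name \<Rightarrow> val \<Rightarrow> trm \<Rightarrow> trm"
  and substd :: "name \<Rightarrow> val \<Rightarrow> dist \<Rightarrow> dist" where
  "substv x w (Var y) = (if x = y then w else Var y)"
| "substv x w (Lam y d) = (if x = y then Lam y d else Lam y (substd x w d))"
| "substv x w Star = Star"
| "substv x w (Pair v1 v2) = Pair (substv x w v1) (substv x w v2)"
| "substv x w (Inl v) = Inl (substv x w v)"
| "substv x w (Inr v) = Inr (substv x w v)"
| "substt x w (Val v) = Val (substv x w v)"
| "substt x w (App s t) = App (substt x w s) (substt x w t)"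
| "substt x w (Seq t d) = Seq (substt x w t) (substd x w d)"
| "substt x w (LetP y z t d) =
     LetP y z (substt x w t) (if x = y \<or> x = z then d else substd x w d)"
| "substt x w (Match t y d1 z d2) =
     Match (substt x w t) y (if x = y then d1 else substd x w d1)
                          z (if x = z then d2 else substd x w d2)"
| "substd x w DZero = DZero"
| "substd x w (DTm t) = DTm (substt x w t)"
| "substd x w (DPlus a b) = DPlus (substd x w a) (substd x w b)"
| "substd x w (DScal \<alpha> a) = DScal \<alpha> (substd x w a)"

fun dmap :: "(trm \<Rightarrow> trm) \<Rightarrow> dist \<Rightarrow> dist" where
  "dmap f DZero = DZero"
| "dmap f (DTm t) = DTm (f t)"
| "dmap f (DPlus a b) = DPlus (dmap f a) (dmap f b)"
| "dmap f (DScal \<alpha> a) = DScal \<alpha> (dmap f a)"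

text \<open>A canonical form \<open>\<Sum>\<^sub>i \<alpha>\<^sub>i t\<^sub>i\<close> (distinct \<open>t\<^sub>i\<close>, coefficients possibly 0)
is a finite partial map from pure terms to coefficients.\<close>

type_synonym cdist = "trm \<Rightarrow> complex option"

definition madd :: "cdist \<Rightarrow> cdist \<Rightarrow> cdist" where
  "madd f g = (\<lambda>t. case (f t, g t) of
      (None, y) \<Rightarrow> y
    | (Some a, None) \<Rightarrow> Some a
    | (Some a, Some b) \<Rightarrow> Some (a + b))"

definition mscal :: "complex \<Rightarrow> cdist \<Rightarrow> cdist" where
  "mscal \<alpha> f = (\<lambda>t. map_option (\<lambda>a. \<alpha> * a) (f t))"

fun nf :: "dist \<Rightarrow> cdist" where
  "nf DZero = Map.empty"
| "nf (DTm t) = [t \<mapsto> 1]"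
| "nf (DPlus a b) = madd (nf a) (nf b)"
| "nf (DScal \<alpha> a) = mscal \<alpha> (nf a)"

definition equiv_dist :: "dist \<Rightarrow> dist \<Rightarrow> bool" where
  "equiv_dist d d' \<longleftrightarrow> nf d = nf d'"

inductive atomic :: "trm \<Rightarrow> dist \<Rightarrow> bool" where
  beta: "atomic (App (Val (Lam x d)) (Val v)) (substd x v d)"
| seq: "atomic (Seq (Val Star) d) d"
| letp: "atomic (LetP x y (Val (Pair v w)) d) (substd y w (substd x v d))"
| match_inl: "atomic (Match (Val (Inl v)) x1 d1 x2 d2) (substd x1 v d1)"
| match_inr: "atomic (Match (Val (Inr v)) x1 d1 x2 d2) (substd x2 v d2)"
| app_arg: "atomic t d \<Longrightarrow> atomic (App s t) (dmap (\<lambda>t'. App s t') d)"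
| app_fun: "atomic s d \<Longrightarrow> atomic (App s (Val v)) (dmap (\<lambda>s'. App s' (Val v)) d)"
| seq_ctx: "atomic t d \<Longrightarrow> atomic (Seq t e) (dmap (\<lambda>t'. Seq t' e) d)"
| let_ctx: "atomic t d \<Longrightarrow> atomic (LetP x y t e) (dmap (\<lambda>t'. LetP x y t' e) d)"
| match_ctx: "atomic t d \<Longrightarrow>
     atomic (Match t x1 e1 x2 e2) (dmap (\<lambda>t'. Match t' x1 e1 x2 e2) d)"

definition step :: "dist \<Rightarrow> dist \<Rightarrow> bool" where
  "step d d' \<longleftrightarrow> (\<exists>\<alpha> s s' r. atomic s s' \<and>
      equiv_dist d (DPlus (DScal \<alpha> (DTm s)) r) \<and>
      equiv_dist d' (DPlus (DScal \<alpha> s') r))"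

abbreviation steps :: "dist \<Rightarrow> dist \<Rightarrow> bool" where
  "steps \<equiv> step\<^sup>*\<^sup>*"

definition cinner :: "cdist \<Rightarrow> cdist \<Rightarrow> complex" where
  "cinner f g = (\<Sum>t\<in>dom f \<inter> dom g. cnj (the (f t)) * the (g t))"

definition cnorm :: "cdist \<Rightarrow> real" where
  "cnorm f = sqrt (Re (cinner f f))"

inductive in_span :: "cdist set \<Rightarrow> cdist \<Rightarrow> bool" for X where
  span_zero: "in_span X Map.empty"
| span_step: "in_span X f \<Longrightarrow> b \<in> X \<Longrightarrow> in_span X (madd f (mscal \<alpha> b))"

definition inl_map :: "cdist \<Rightarrow> cdist" where
  "inl_map f = (\<lambda>t. case t of Val (Inl v) \<Rightarrow> f (Val v) | _ \<Rightarrow> None)"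
definition inr_map :: "cdist \<Rightarrow> cdist" where
  "inr_map f = (\<lambda>t. case t of Val (Inr v) \<Rightarrow> f (Val v) | _ \<Rightarrow> None)"

definition list_dist :: "(complex \<times> val) list \<Rightarrow> dist" where
  "list_dist ws = foldr (\<lambda>(\<beta>, w) acc. DPlus (DScal \<beta> (DTm (Val w))) acc) ws DZero"

definition canon :: "(complex \<times> val) list \<Rightarrow> cdist \<Rightarrow> bool" where
  "canon ws f \<longleftrightarrow> distinct (map snd ws) \<and> nf (list_dist ws) = f"

definition lin_subst :: "name \<Rightarrow> dist \<Rightarrow> (complex \<times> val) list \<Rightarrow> dist" where
  "lin_subst x d ws = foldr (\<lambda>(\<beta>, w) acc. DPlus (DScal \<beta> (substd x w d)) acc) ws DZero"

datatype ty = TU | TSum ty ty | TSharp ty | TArr ty ty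

definition TB :: ty where "TB = TSum TU TU"

fun sem :: "ty \<Rightarrow> cdist set" where
  "sem TU = {[Val Star \<mapsto> 1]}"
| "sem (TSum A B) = inl_map ` sem A \<union> inr_map ` sem B"
| "sem (TSharp A) = {f. in_span (sem A) f \<and> cnorm f = 1}"
| "sem (TArr A B) = {[Val (Lam x d) \<mapsto> 1] | x d. closed_v (Lam x d) \<and>
      (\<forall>v \<in> sem A. \<forall>ws. canon ws v \<longrightarrow>
         (\<exists>d'. steps (lin_subst x d ws) d' \<and> nf d' \<in> sem B))}"

end

theory Submission imports Defs begin

text \<open>If a term distribution reduces to a value distribution, the coefficients of the latter are
  determined by the former, since atomic evaluation is deterministic, and they depend linearly on
  it.  Hence \<open>t\<langle>x := \<alpha>\<cdot>tt + \<beta>\<cdot>ff\<rangle>\<close> can only reduce to \<open>\<alpha>\<cdot>v\<^sub>1 + \<beta>\<cdot>v\<^sub>2\<close>, where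
  \<open>t[x:=tt] \<succ>\<^sup>* v\<^sub>1\<close> and \<open>t[x:=ff] \<succ>\<^sup>* v\<^sub>2\<close>.  This has norm one for all unit vectors \<open>(\<alpha>, \<beta>)\<close>
  iff \<open>v\<^sub>1\<close> and \<open>v\<^sub>2\<close> are orthogonal unit vectors, by polarization.\<close>

definition coeff :: "cdist \<Rightarrow> trm \<Rightarrow> complex" where
  "coeff f u = (case f u of None \<Rightarrow> 0 | Some a \<Rightarrow> a)"

lemma dom_madd [simp]: "dom (madd f g) = dom f \<union> dom g"
  by (auto simp: madd_def dom_def split: option.splits)

lemma dom_mscal [simp]: "dom (mscal a f) = dom f"
  by (auto simp: mscal_def)

lemma coeff_madd [simp]: "coeff (madd f g) u = coeff f u + coeff g u"
  by (auto simp: coeff_def madd_def split: option.splits)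

lemma coeff_mscal [simp]: "coeff (mscal a f) u = a * coeff f u"
  by (auto simp: coeff_def mscal_def split: option.splits)

lemma coeff_singleton [simp]: "coeff [s \<mapsto> c] u = (if u = s then c else 0)"
  by (simp add: coeff_def)

lemma coeff_empty [simp]: "coeff Map.empty u = 0"
  by (simp add: coeff_def)

lemma coeff_notin_dom: "u \<notin> dom f \<Longrightarrow> coeff f u = 0"
  by (auto simp: coeff_def domIff)

lemma finite_dom_nf [simp]: "finite (dom (nf d))"
  by (induction d rule: nf.induct) (auto simp del: domIff fun_upd_apply)

lemma madd_empty_right [simp]: "madd f Map.empty = f"
  by (rule ext) (auto simp: madd_def split: option.splits)


lemma madd_assoc: "madd (madd f g) h = madd f (madd g h)"
  by (rule ext) (auto simp: madd_def add.assoc split: option.splits)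

lemma madd_left_commute: "madd f (madd g h) = madd g (madd f h)"
  by (rule ext) (auto simp: madd_def ac_simps split: option.splits)

lemma mscal_madd: "mscal a (madd f g) = madd (mscal a f) (mscal a g)"
  by (rule ext) (auto simp: mscal_def madd_def ring_distribs split: option.splits)

lemma mscal_mscal: "mscal a (mscal b f) = mscal (a * b) f"
  by (rule ext) (auto simp: mscal_def option.map_comp o_def mult.assoc)

lemma mscal_one [simp]: "mscal 1 f = f"
  by (rule ext) (auto simp: mscal_def option.map_ident)


lemma cinner_eq_sum:
  assumes "finite S" "dom f \<subseteq> S"
  shows "cinner f g = (\<Sum>u\<in>S. cnj (coeff f u) * coeff g u)"
  unfolding cinner_def
proof (rule sum.mono_neutral_cong_left)
  show "\<forall>u\<in>S - dom f \<inter> dom g. cnj (coeff f u) * coeff g u = 0"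
    by (auto simp: coeff_def split: option.splits)
qed (use assms in \<open>auto simp: coeff_def\<close>)

lemma atomic_Val [simp]: "\<not> atomic (Val v) d"
  by (auto elim: atomic.cases)

lemma atomic_deterministic: "atomic s d1 \<Longrightarrow> atomic s d2 \<Longrightarrow> d1 = d2"
  by (induction arbitrary: d2 rule: atomic.induct) (erule atomic.cases; auto)+

text \<open>Big-step evaluation: \<open>evaluates s g\<close> says that the pure term \<open>s\<close> reduces to a value
  distribution with coefficient vector \<open>g\<close>.\<close>

inductive evaluates :: "trm \<Rightarrow> (trm \<Rightarrow> complex) \<Rightarrow> bool" where
  evaluates_Val: "evaluates (Val v) (\<lambda>u. if u = Val v then 1 else 0)"
| evaluates_atomic: "atomic s d \<Longrightarrow> (\<forall>u \<in> dom (nf d). evaluates u (g u)) \<Longrightarrow>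
     evaluates s (\<lambda>w. \<Sum>u\<in>dom (nf d). coeff (nf d) u * g u w)"

lemma evaluates_functional: "evaluates s g1 \<Longrightarrow> evaluates s g2 \<Longrightarrow> g1 = g2"
proof (induction arbitrary: g2 rule: evaluates.induct)
  case (evaluates_Val v)
  then show ?case by (auto elim: evaluates.cases)
next
  case (evaluates_atomic s d g)
  from evaluates_atomic.prems evaluates_atomic.hyps(1) obtain g' where
    g2: "g2 = (\<lambda>w. \<Sum>u\<in>dom (nf d). coeff (nf d) u * g' u w)"
    and "\<forall>u \<in> dom (nf d). evaluates u (g' u)"
    by (cases rule: evaluates.cases) (auto dest: atomic_deterministic)
  with evaluates_atomic.IH have "\<And>u. u \<in> dom (nf d) \<Longrightarrow> g u = g' u" by blast
  then show ?case unfolding g2 by (intro ext sum.cong) auto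
qed

definition evaluable :: "cdist \<Rightarrow> bool" where
  "evaluable f \<longleftrightarrow> (\<forall>u\<in>dom f. \<exists>g. evaluates u g)"

definition result :: "trm \<Rightarrow> trm \<Rightarrow> complex" where
  "result u = (THE g. evaluates u g)"

definition denot :: "cdist \<Rightarrow> trm \<Rightarrow> complex" where
  "denot f w = (\<Sum>u\<in>dom f. coeff f u * result u w)"

lemma result_eqI: "evaluates u g \<Longrightarrow> result u = g"
  unfolding result_def using evaluates_functional by blast

lemma evaluates_result: "\<exists>g. evaluates u g \<Longrightarrow> evaluates u (result u)"
  using result_eqI by blast

lemma denot_eq_sum:
  "finite S \<Longrightarrow> dom f \<subseteq> S \<Longrightarrow> denot f w = (\<Sum>u\<in>S. coeff f u * result u w)"
  unfolding denot_def by (rule sum.mono_neutral_left) (auto simp: coeff_notin_dom)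

lemma denot_madd:
  assumes "finite (dom f)" "finite (dom g)"
  shows "denot (madd f g) w = denot f w + denot g w"
  using assms denot_eq_sum[of "dom f \<union> dom g" f w] denot_eq_sum[of "dom f \<union> dom g" g w]
    denot_eq_sum[of "dom f \<union> dom g" "madd f g" w]
  by (simp add: ring_distribs sum.distrib)

lemma denot_mscal: "denot (mscal a f) w = a * denot f w"
  unfolding denot_def by (simp add: sum_distrib_left mult.assoc)

lemma denot_singleton: "denot [s \<mapsto> 1] w = result s w"
  unfolding denot_def by simp

lemma step_nf:
  "step d d' \<Longrightarrow> \<exists>\<alpha> s s' r. atomic s s' \<and>
     nf d = madd (mscal \<alpha> [s \<mapsto> 1]) (nf r) \<and> nf d' = madd (mscal \<alpha> (nf s')) (nf r)"
  unfolding step_def equiv_dist_def by auto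

lemma step_reflects_denot:
  assumes "step d d'" "evaluable (nf d')"
  shows "evaluable (nf d) \<and> denot (nf d) = denot (nf d')"
proof -
  obtain \<alpha> s s' r where at: "atomic s s'"
    and d: "nf d = madd (mscal \<alpha> [s \<mapsto> 1]) (nf r)"
    and d': "nf d' = madd (mscal \<alpha> (nf s')) (nf r)"
    using step_nf[OF assms(1)] by blast
  have "\<forall>u \<in> dom (nf s'). evaluates u (result u)"
    using assms(2) d' unfolding evaluable_def by (metis UnI1 dom_madd dom_mscal evaluates_result)
  then have s: "evaluates s (denot (nf s'))"
    using evaluates_atomic[OF at] by (simp add: denot_def[abs_def])
  have "evaluable (nf d)"
    using assms(2) s by (auto simp: evaluable_def d d')
  moreover have "denot (nf d) = denot (nf d')"
    by (rule ext) (simp add: d d' denot_madd denot_mscal denot_singleton result_eqI[OF s])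
  ultimately show ?thesis by blast
qed

lemma steps_reflect_denot:
  "steps d e \<Longrightarrow> evaluable (nf e) \<Longrightarrow> evaluable (nf d) \<and> denot (nf d) = denot (nf e)"
  by (induction rule: converse_rtranclp_induct) (auto dest: step_reflects_denot)

lemma denot_values:
  assumes fin: "finite (dom f)" and vals: "dom f \<subseteq> range Val"
  shows "evaluable f \<and> denot f = coeff f"
proof
  show "evaluable f" using vals unfolding evaluable_def by (auto intro: evaluates_Val)
  have "denot f w = coeff f w" for w
  proof -
    have "denot f w = (\<Sum>u\<in>dom f. if u = w then coeff f u else 0)"
      unfolding denot_def using vals by (intro sum.cong) (auto simp: result_eqI[OF evaluates_Val])
    then show ?thesis using fin by (cases "w \<in> dom f") (simp_all add: coeff_notin_dom)
  qed
  then show "denot f = coeff f" ..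
qed

lemma coeff_reduct_eq_denot:
  assumes "steps d e" "dom (nf e) \<subseteq> range Val"
  shows "coeff (nf e) = denot (nf d)"
  using steps_reflect_denot[OF assms(1)] denot_values[OF finite_dom_nf assms(2)] by simp

lemma step_cong_nf: "step d e \<Longrightarrow> nf d = nf d0 \<Longrightarrow> step d0 e"
  unfolding step_def equiv_dist_def by metis

lemma steps_cong_nf: "steps d e \<Longrightarrow> nf d = nf d0 \<Longrightarrow> \<exists>e'. steps d0 e' \<and> nf e' = nf e"
  by (erule converse_rtranclpE) (auto intro: converse_rtranclp_into_rtranclp step_cong_nf)

lemma step_DPlus_left:
  assumes "step a a'"
  shows "step (DPlus (DScal \<beta> a) c) (DPlus (DScal \<beta> a') c)"
proof -
  obtain \<alpha> s s' r where "atomic s s'"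
    and "nf a = madd (mscal \<alpha> [s \<mapsto> 1]) (nf r)" "nf a' = madd (mscal \<alpha> (nf s')) (nf r)"
    using step_nf[OF assms] by blast
  then have "atomic s s' \<and>
      nf (DPlus (DScal \<beta> a) c) = nf (DPlus (DScal (\<beta> * \<alpha>) (DTm s)) (DPlus (DScal \<beta> r) c)) \<and>
      nf (DPlus (DScal \<beta> a') c) = nf (DPlus (DScal (\<beta> * \<alpha>) s') (DPlus (DScal \<beta> r) c))"
    by (simp add: mscal_madd mscal_mscal madd_assoc)
  then show ?thesis unfolding step_def equiv_dist_def by blast
qed

lemma step_DPlus_right:
  assumes "step c c'"
  shows "step (DPlus e c) (DPlus e c')"
proof -
  obtain \<alpha> s s' r where "atomic s s'"
    and "nf c = madd (mscal \<alpha> [s \<mapsto> 1]) (nf r)" "nf c' = madd (mscal \<alpha> (nf s')) (nf r)"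
    using step_nf[OF assms] by blast
  then have "atomic s s' \<and>
      nf (DPlus e c) = nf (DPlus (DScal \<alpha> (DTm s)) (DPlus e r)) \<and>
      nf (DPlus e c') = nf (DPlus (DScal \<alpha> s') (DPlus e r))"
    by (simp add: madd_left_commute)
  then show ?thesis unfolding step_def equiv_dist_def by blast
qed

lemma steps_DPlus_left: "steps a a' \<Longrightarrow> steps (DPlus (DScal \<beta> a) c) (DPlus (DScal \<beta> a') c)"
  by (induction rule: rtranclp_induct) (auto intro: rtranclp.rtrancl_into_rtrancl step_DPlus_left)

lemma steps_DPlus_right: "steps c c' \<Longrightarrow> steps (DPlus e c) (DPlus e c')"
  by (induction rule: rtranclp_induct) (auto intro: rtranclp.rtrancl_into_rtrancl step_DPlus_right)

definition lin_map :: "(val \<Rightarrow> dist) \<Rightarrow> (complex \<times> val) list \<Rightarrow> dist" where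
  "lin_map g ws = foldr (\<lambda>(\<beta>, w) acc. DPlus (DScal \<beta> (g w)) acc) ws DZero"

lemma lin_map_Nil [simp]: "lin_map g [] = DZero"
  and lin_map_Cons [simp]: "lin_map g (p # ws) = DPlus (DScal (fst p) (g (snd p))) (lin_map g ws)"
  by (simp_all add: lin_map_def split_def)

lemma list_dist_eq_lin_map: "list_dist ws = lin_map (\<lambda>w. DTm (Val w)) ws"
  by (simp add: list_dist_def lin_map_def)

lemma lin_subst_eq_lin_map: "lin_subst x d ws = lin_map (\<lambda>w. substd x w d) ws"
  by (simp add: lin_subst_def lin_map_def)

lemma steps_lin_map:
  "(\<And>w. w \<in> snd ` set ws \<Longrightarrow> steps (g w) (h w)) \<Longrightarrow> steps (lin_map g ws) (lin_map h ws)"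
proof (induction ws)
  case (Cons p ws)
  obtain \<beta> w where p: "p = (\<beta>, w)" by (cases p)
  have "steps (lin_map g (p # ws)) (DPlus (DScal \<beta> (h w)) (lin_map g ws))"
    using Cons.prems by (auto simp: p intro: steps_DPlus_left)
  also have "steps \<dots> (lin_map h (p # ws))"
    using Cons by (auto simp: p intro: steps_DPlus_right)
  finally show ?case .
qed simp

lemma dom_nf_list_dist: "dom (nf (list_dist ws)) = (\<lambda>p. Val (snd p)) ` set ws"
  unfolding list_dist_eq_lin_map by (induction ws) (auto simp del: domIff fun_upd_apply)

lemma dom_nf_lin_map: "dom (nf (lin_map g ws)) \<subseteq> (\<Union>w \<in> snd ` set ws. dom (nf (g w)))"
proof (induction ws)
  case (Cons p ws)
  then show ?case by (cases p) (simp; blast)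
qed simp

lemma coeff_nf_lin_map:
  assumes "finite S" "snd ` set ws \<subseteq> S"
  shows "coeff (nf (lin_map g ws)) u =
    (\<Sum>w\<in>S. coeff (nf (list_dist ws)) (Val w) * coeff (nf (g w)) u)"
  using assms(2)
proof (induction ws)
  case (Cons p ws)
  obtain \<beta> w where p: "p = (\<beta>, w)" by (cases p)
  have "w \<in> S" using Cons.prems p by auto
  then have "(\<Sum>w'\<in>S. \<beta> * (if w' = w then 1 else 0) * coeff (nf (g w')) u) = \<beta> * coeff (nf (g w)) u"
    by (subst sum.remove[OF assms(1)]) auto
  then show ?case
    using Cons by (simp add: p list_dist_eq_lin_map distrib_right sum.distrib)
qed (simp add: list_dist_eq_lin_map)

lemma cinner_lin_comb:
  assumes "finite S" "dom f \<subseteq> S" "dom p \<subseteq> S" "dom q \<subseteq> S"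
    and f: "\<And>u. coeff f u = a * coeff p u + b * coeff q u"
  shows "cinner f f = cnj a * a * cinner p p + cnj b * b * cinner q q
    + cnj a * b * cinner p q + cnj b * a * cnj (cinner p q)"
proof -
  have "cinner f f = (\<Sum>u\<in>S. cnj a * a * (cnj (coeff p u) * coeff p u)
      + cnj b * b * (cnj (coeff q u) * coeff q u) + cnj a * b * (cnj (coeff p u) * coeff q u)
      + cnj b * a * cnj (cnj (coeff p u) * coeff q u))"
    unfolding cinner_eq_sum[OF assms(1,2)] f by (intro sum.cong) (simp_all add: algebra_simps)
  also have "\<dots> = cnj a * a * cinner p p + cnj b * b * cinner q q
      + cnj a * b * cinner p q + cnj b * a * cnj (cinner p q)"
    using assms(1,3,4)
    by (simp add: cinner_eq_sum sum.distrib cnj_sum flip: sum_distrib_left)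
  finally show ?thesis .
qed

lemma cnorm_eq_1_iff: "cnorm f = 1 \<longleftrightarrow> cinner f f = 1"
proof -
  have "Im (cinner f f) = 0"
    unfolding cinner_def by (simp add: Im_sum)
  then show ?thesis
    by (auto simp: cnorm_def complex_eq_iff)
qed

lemma in_span_singletons_iff:
  "in_span {[u \<mapsto> 1] | u. u \<in> U} f \<longleftrightarrow> finite (dom f) \<and> dom f \<subseteq> U"
proof
  assume "in_span {[u \<mapsto> 1] | u. u \<in> U} f"
  then show "finite (dom f) \<and> dom f \<subseteq> U"
    by (induction rule: in_span.induct) (simp_all, elim exE conjE, simp)
next
  assume "finite (dom f) \<and> dom f \<subseteq> U"
  then have "finite (dom f)" "dom f \<subseteq> U" by auto
  then show "in_span {[u \<mapsto> 1] | u. u \<in> U} f"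
  proof (induction "dom f" arbitrary: f rule: finite_induct)
    case empty
    then have "f = Map.empty" by (simp flip: dom_eq_empty_conv)
    then show ?case by (simp add: span_zero)
  next
    case (insert u D)
    obtain a where a: "f u = Some a"
      using insert.hyps(4) by auto
    have "D = dom (f(u := None))" "u \<in> U"
      using insert.hyps(2,4) insert.prems by auto
    then have IH: "in_span {[u \<mapsto> 1] | u. u \<in> U} (f(u := None))"
      using insert.prems by (intro insert.hyps(3)) auto
    have u: "[u \<mapsto> 1] \<in> {[u \<mapsto> 1] | u. u \<in> U}"
      using \<open>u \<in> U\<close> by blast
    have f: "f = madd (f(u := None)) (mscal a [u \<mapsto> 1])"
      using a by (intro ext) (simp add: madd_def mscal_def split: option.split)
    show ?case
      by (subst f) (rule span_step[OF IH u])
  qed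
qed

abbreviation T :: trm where "T \<equiv> Val tt"
abbreviation F :: trm where "F \<equiv> Val ff"

lemma tt_ne_ff [simp]: "tt \<noteq> ff" "ff \<noteq> tt"
  by (auto simp: tt_def ff_def)

lemma sem_TB: "sem TB = {[u \<mapsto> 1] | u. u \<in> {T, F}}"
proof -
  have "inl_map [Val Star \<mapsto> 1] = [T \<mapsto> 1]" "inr_map [Val Star \<mapsto> 1] = [F \<mapsto> 1]"
    by (rule ext, auto simp: inl_map_def inr_map_def tt_def ff_def split: trm.split val.split)+
  then show ?thesis by (auto simp: TB_def)
qed

lemma sem_sharp_TB_iff: "f \<in> sem (TSharp TB) \<longleftrightarrow> dom f \<subseteq> {T, F} \<and> cinner f f = 1"
  unfolding sem.simps sem_TB in_span_singletons_iff mem_Collect_eq cnorm_eq_1_iff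
  using finite_subset by blast

lemma cinner_sharp_TB:
  "dom f \<subseteq> {T, F} \<Longrightarrow> cinner f g = cnj (coeff f T) * coeff g T + cnj (coeff f F) * coeff g F"
  by (subst cinner_eq_sum[of "{T, F}"]) auto

lemma polarization_zero:
  fixes z :: complex
  assumes "\<And>a b. cnj a * a + cnj b * b = 1 \<Longrightarrow> cnj a * b * z + cnj b * a * cnj z = 0"
  shows "z = 0"
proof -
  define r :: complex where "r = of_real (1 / sqrt 2)"
  have r: "cnj r * r = 1 / 2" "cnj r * (\<i> * r) = \<i> / 2" "cnj (\<i> * r) * r = - \<i> / 2"
    "cnj (\<i> * r) * (\<i> * r) = 1 / 2"
    by (simp_all add: r_def flip: of_real_mult)
  have "cnj r * r * z + cnj r * r * cnj z = 0"
    by (rule assms) (simp add: r)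
  then have "(z + cnj z) / 2 = 0"
    unfolding r(1) by (simp add: add_divide_distrib)
  then have "z + cnj z = 0"
    by simp
  moreover have "cnj r * (\<i> * r) * z + cnj (\<i> * r) * r * cnj z = 0"
    by (rule assms) (unfold r(1,4), simp)
  then have "\<i> * (z - cnj z) / 2 = 0"
    unfolding r(2,3) by (simp add: algebra_simps)
  then have "z - cnj z = 0"
    by simp
  ultimately show ?thesis by (simp add: complex_eq_iff)
qed

lemma lin_subst_reduces_if_orthogonal:
  assumes v1: "nf v1 \<in> sem (TSharp TB)" and v2: "nf v2 \<in> sem (TSharp TB)"
    and s1: "steps (substd x tt t) v1" and s2: "steps (substd x ff t) v2"
    and orth: "cinner (nf v1) (nf v2) = 0"
    and v: "v \<in> sem (TSharp TB)" and ws: "canon ws v"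
  shows "\<exists>d'. steps (lin_subst x t ws) d' \<and> nf d' \<in> sem (TSharp TB)"
proof -
  have v_list: "nf (list_dist ws) = v" using ws by (simp add: canon_def)
  note unit = v1[unfolded sem_sharp_TB_iff] v2[unfolded sem_sharp_TB_iff] v[unfolded sem_sharp_TB_iff]
  then have ws_bool: "snd ` set ws \<subseteq> {tt, ff}"
    using v_list dom_nf_list_dist[of ws] by auto
  define g where "g w = (if w = tt then v1 else v2)" for w
  have g_bool: "dom (nf (g w)) \<subseteq> {T, F}" for w
    using unit by (simp add: g_def)
  have steps: "steps (lin_subst x t ws) (lin_map g ws)"
    unfolding lin_subst_eq_lin_map using ws_bool s1 s2
    by (intro steps_lin_map) (auto simp: g_def)
  have dom: "dom (nf (lin_map g ws)) \<subseteq> {T, F}"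
    using dom_nf_lin_map[of g ws] g_bool by blast
  have "coeff (nf (lin_map g ws)) u = coeff v T * coeff (nf v1) u + coeff v F * coeff (nf v2) u"
    for u using coeff_nf_lin_map[of "{tt, ff}" ws g u] ws_bool by (simp add: g_def v_list)
  then have "cinner (nf (lin_map g ws)) (nf (lin_map g ws)) =
      cnj (coeff v T) * coeff v T * cinner (nf v1) (nf v1)
      + cnj (coeff v F) * coeff v F * cinner (nf v2) (nf v2)
      + cnj (coeff v T) * coeff v F * cinner (nf v1) (nf v2)
      + cnj (coeff v F) * coeff v T * cnj (cinner (nf v1) (nf v2))"
    using dom unit by (intro cinner_lin_comb[of "{T, F}"]) auto
  also have "\<dots> = cnj (coeff v T) * coeff v T + cnj (coeff v F) * coeff v F"
    using unit orth by simp
  also have "\<dots> = 1"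
    using unit cinner_sharp_TB[of v v] by simp
  finally show ?thesis
    unfolding sem_sharp_TB_iff using steps dom unit by auto
qed

lemma substd_reduces_if_lin_subst_reduces:
  assumes H: "\<forall>v \<in> sem (TSharp TB). \<forall>ws. canon ws v \<longrightarrow>
      (\<exists>d'. steps (lin_subst x t ws) d' \<and> nf d' \<in> sem (TSharp TB))"
    and w: "w \<in> {tt, ff}"
  shows "\<exists>v. steps (substd x w t) v \<and> nf v \<in> sem (TSharp TB)"
proof -
  have w_unit: "nf (list_dist [(1, w)]) \<in> sem (TSharp TB)"
    using w unfolding sem_sharp_TB_iff by (auto simp: list_dist_def cinner_def)
  obtain e where "steps (lin_subst x t [(1, w)]) e" "nf e \<in> sem (TSharp TB)"
    using H[rule_format, OF w_unit, of "[(1, w)]"] by (auto simp: canon_def)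
  moreover have "nf (lin_subst x t [(1, w)]) = nf (substd x w t)"
    by (simp add: lin_subst_eq_lin_map)
  ultimately show ?thesis
    using steps_cong_nf by metis
qed

lemma orthogonal_if_lin_subst_reduces:
  assumes H: "\<forall>v \<in> sem (TSharp TB). \<forall>ws. canon ws v \<longrightarrow>
      (\<exists>d'. steps (lin_subst x t ws) d' \<and> nf d' \<in> sem (TSharp TB))"
  shows "\<exists>v1 v2. nf v1 \<in> sem (TSharp TB) \<and> nf v2 \<in> sem (TSharp TB) \<and>
    steps (substd x tt t) v1 \<and> steps (substd x ff t) v2 \<and> cinner (nf v1) (nf v2) = 0"
proof -
  obtain v1 v2 where s1: "steps (substd x tt t) v1" and v1: "nf v1 \<in> sem (TSharp TB)"
    and s2: "steps (substd x ff t) v2" and v2: "nf v2 \<in> sem (TSharp TB)"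
    using substd_reduces_if_lin_subst_reduces[OF H] by blast
  note unit = v1[unfolded sem_sharp_TB_iff] v2[unfolded sem_sharp_TB_iff]
  have denot_tt: "denot (nf (substd x tt t)) = coeff (nf v1)"
    by (rule coeff_reduct_eq_denot[OF s1, symmetric]) (use unit in auto)
  have denot_ff: "denot (nf (substd x ff t)) = coeff (nf v2)"
    by (rule coeff_reduct_eq_denot[OF s2, symmetric]) (use unit in auto)
  have "cnj a * b * cinner (nf v1) (nf v2) + cnj b * a * cnj (cinner (nf v1) (nf v2)) = 0"
    if ab: "cnj a * a + cnj b * b = 1" for a b
  proof -
    let ?ws = "[(a, tt), (b, ff)]"
    have ws_unit: "nf (list_dist ?ws) \<in> sem (TSharp TB)"
      using ab unfolding sem_sharp_TB_iff by (simp add: list_dist_def cinner_sharp_TB)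
    obtain e where e: "steps (lin_subst x t ?ws) e" and "nf e \<in> sem (TSharp TB)"
      using H[rule_format, OF ws_unit, of ?ws] by (auto simp: canon_def)
    then have dom: "dom (nf e) \<subseteq> {T, F}" and norm: "cinner (nf e) (nf e) = 1"
      unfolding sem_sharp_TB_iff by auto
    have "coeff (nf e) = denot (nf (lin_subst x t ?ws))"
      by (rule coeff_reduct_eq_denot[OF e]) (use dom in auto)
    then have "coeff (nf e) u = a * coeff (nf v1) u + b * coeff (nf v2) u" for u
      by (simp add: lin_subst_eq_lin_map denot_madd denot_mscal denot_tt denot_ff)
    then have "cinner (nf e) (nf e) = cnj a * a * 1 + cnj b * b * 1
        + cnj a * b * cinner (nf v1) (nf v2) + cnj b * a * cnj (cinner (nf v1) (nf v2))"
      using dom unit cinner_lin_comb[of "{T, F}" "nf e" "nf v1" "nf v2" a b] by simp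
    then show ?thesis
      using norm ab by simp
  qed
  then have "cinner (nf v1) (nf v2) = 0"
    by (rule polarization_zero)
  then show ?thesis
    using s1 s2 v1 v2 by blast
qed

theorem proposition5:
  fixes x :: name and t :: dist
  assumes "closed_v (Lam x t)"
  shows "[Val (Lam x t) \<mapsto> 1] \<in> sem (TArr (TSharp TB) (TSharp TB)) \<longleftrightarrow>
    (\<exists>v1 v2. nf v1 \<in> sem (TSharp TB) \<and> nf v2 \<in> sem (TSharp TB) \<and>
       steps (substd x tt t) v1 \<and> steps (substd x ff t) v2 \<and>
       cinner (nf v1) (nf v2) = 0)"
    (is "_ \<longleftrightarrow> ?orthogonal")
proof
  assume "[Val (Lam x t) \<mapsto> 1] \<in> sem (TArr (TSharp TB) (TSharp TB))"
  then obtain x' t' where eq: "[Val (Lam x t) \<mapsto> 1] = [Val (Lam x' t') \<mapsto> (1 :: complex)]"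
    and "\<forall>v \<in> sem (TSharp TB). \<forall>ws. canon ws v \<longrightarrow>
      (\<exists>d'. steps (lin_subst x' t' ws) d' \<and> nf d' \<in> sem (TSharp TB))"
    by auto
  moreover have "x' = x \<and> t' = t"
    using eq by (metis fun_upd_same fun_upd_apply option.distinct(1) trm.inject(1) val.inject(2))
  ultimately show ?orthogonal
    by (intro orthogonal_if_lin_subst_reduces) simp
next
  assume ?orthogonal
  then obtain v1 v2 where "nf v1 \<in> sem (TSharp TB)" "nf v2 \<in> sem (TSharp TB)"
    "steps (substd x tt t) v1" "steps (substd x ff t) v2" "cinner (nf v1) (nf v2) = 0"
    by blast
  then show "[Val (Lam x t) \<mapsto> 1] \<in> sem (TArr (TSharp TB) (TSharp TB))"
    unfolding sem.simps(4) using assms lin_subst_reduces_if_orthogonal by blast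
qed

end
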